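(* For each $t\in\{0,1,\dots,T\}$ and every state $(\bm{x},k)=((x_1,\dots,x_N),k)\in\mathbb{N}_0^{N+1}$, $$V^N_t(\bm{x},k)=\sum_{i=1}^N \tilde V^{N,i}_t(x_i,k).$$
   Context: Fix integers $N\ge1$, $T\ge1$, reals $\alpha_0,\beta_0>0$, and for each $i\in\mathcal{N}=\{1,\dots,N\}$ an integer failure threshold $\xi_i\ge1$ and costs $0<c_p^i<c_u^i$. $\mathbb{N}_0=\{0,1,2,\dots\}$. For real $r>0$ and $p\in(0,1)$, $NB(r,p)$ is the distribution on $\mathbb{N}_0$ with $P(n)=\frac{\Gamma(n+r)}{\Gamma(r)n!}p^r(1-p)^n$; $NB(0,p)$ is the point mass at $0$. For $t\in\{0,\dots,T\}$ let $p_t=\frac{\beta_0+Nt}{\beta_0+Nt+1}$. For $x\in\mathbb{N}_0$ let $\mathbb{I}_i(x)=1$ if $x\ge\xi_i$ and $0$ otherwise; the admissible actions for system $i$ at level $x$ are $\mathcal{A}_i(x)=\{0,1\}$ if $x<\xi_i$ and $\{1\}$ if $x\ge\xi_i$ ($a=1$ means replacement, $a=0$ means no action). Let $C_i(x,a)=a(1-\mathbb{I}_i(x))c_p^i+\mathbb{I}_i(x)c_u^i$. Original MDP: state $(\bm{x},k)\in\mathbb{N}_0^{N+1}$, actions $\bm{a}\in\prod_i\mathcal{A}_i(x_i)$, cost $C(\bm{x},\bm{a})=\sum_i C_i(x_i,a_i)$. $V^N_T(\bm{x},k)=\sum_i\mathbb{I}_i(x_i)c_u^i$, and for $t=T-1,\dots,0$: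 $V^N_t(\bm{x},k)=\min_{\bm{a}}\{C(\bm{x},\bm{a})+\mathbb{E}[V^N_{t+1}(\bm{x}'+\bm{Z},k+\sum_i Z_i)]\}$, where $Z_1,\dots,Z_N$ are i.i.d. $NB(\alpha_0+k,p_t)$ and $x'_i=x_i$ if $a_i=0$, $x'_i=0$ if $a_i=1$. Alternative (per-system) MDP: state $(x,k)\in\mathbb{N}_0^2$, $\tilde V^{N,i}_T(x,k)=\mathbb{I}_i(x)c_u^i$, and for $t=T-1,\dots,0$: $\tilde V^{N,i}_t(x,k)=\min_{a\in\mathcal{A}_i(x)}\{C_i(x,a)+\mathbb{E}[\tilde V^{N,i}_{t+1}(x(1-a)+Z,\;k+Z+K)]\}$, where $Z\sim NB(\alpha_0+k,p_t)$ and $K\sim NB((N-1)(\alpha_0+k),p_t)$ are independent. *)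

theory Defs
  imports "HOL-Analysis.Analysis"
begin

definition nbpmf :: "real \<Rightarrow> real \<Rightarrow> nat \<Rightarrow> real" where
  "nbpmf r p n = (if r = 0 then (if n = 0 then 1 else 0)
     else Gamma (real n + r) / (Gamma r * fact n) * p powr r * (1 - p) ^ n)"

definition pt :: "real \<Rightarrow> nat \<Rightarrow> nat \<Rightarrow> real" where
  "pt b0 N t = (b0 + real N * real t) / (b0 + real N * real t + 1)"

definition Ind :: "(nat \<Rightarrow> nat) \<Rightarrow> nat \<Rightarrow> nat \<Rightarrow> real" where
  "Ind xi i x = (if x \<ge> xi i then 1 else 0)"

definition Act :: "(nat \<Rightarrow> nat) \<Rightarrow> nat \<Rightarrow> nat \<Rightarrow> nat set" where
  "Act xi i x = (if x < xi i then {0, 1} else {1})"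

definition Cost :: "(nat \<Rightarrow> nat) \<Rightarrow> (nat \<Rightarrow> real) \<Rightarrow> (nat \<Rightarrow> real) \<Rightarrow> nat \<Rightarrow> nat \<Rightarrow> nat \<Rightarrow> real" where
  "Cost xi cp cu i x a = real a * (1 - Ind xi i x) * cp i + Ind xi i x * cu i"

text \<open>Original MDP, indexed by the number m = T - t of remaining steps.
  States: x :: nat => nat (only components 1..N matter), k :: nat.\<close>
primrec VO_steps :: "nat \<Rightarrow> nat \<Rightarrow> real \<Rightarrow> real \<Rightarrow> (nat \<Rightarrow> nat) \<Rightarrow> (nat \<Rightarrow> real) \<Rightarrow> (nat \<Rightarrow> real)
    \<Rightarrow> nat \<Rightarrow> (nat \<Rightarrow> nat) \<Rightarrow> nat \<Rightarrow> real" where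
  "VO_steps N T a0 b0 xi cp cu 0 x k = (\<Sum>i=1..N. Ind xi i (x i) * cu i)"
| "VO_steps N T a0 b0 xi cp cu (Suc m) x k =
     Min ((\<lambda>a. (\<Sum>i=1..N. Cost xi cp cu i (x i) (a i))
        + infsum (\<lambda>z. (\<Prod>i=1..N. nbpmf (a0 + real k) (pt b0 N (T - Suc m)) (z i))
              * VO_steps N T a0 b0 xi cp cu m
                  (\<lambda>i. (if a i = 1 then 0 else x i) + z i) (k + (\<Sum>i=1..N. z i)))
            (PiE {1..N} (\<lambda>_. UNIV)))
       ` PiE {1..N} (\<lambda>i. Act xi i (x i)))"

definition VO :: "nat \<Rightarrow> nat \<Rightarrow> real \<Rightarrow> real \<Rightarrow> (nat \<Rightarrow> nat) \<Rightarrow> (nat \<Rightarrow> real) \<Rightarrow> (nat \<Rightarrow> real)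
    \<Rightarrow> nat \<Rightarrow> (nat \<Rightarrow> nat) \<Rightarrow> nat \<Rightarrow> real" where
  "VO N T a0 b0 xi cp cu t x k = VO_steps N T a0 b0 xi cp cu (T - t) x k"

primrec VA_steps :: "nat \<Rightarrow> nat \<Rightarrow> real \<Rightarrow> real \<Rightarrow> (nat \<Rightarrow> nat) \<Rightarrow> (nat \<Rightarrow> real) \<Rightarrow> (nat \<Rightarrow> real)
    \<Rightarrow> nat \<Rightarrow> nat \<Rightarrow> nat \<Rightarrow> nat \<Rightarrow> real" where
  "VA_steps N T a0 b0 xi cp cu i 0 x k = Ind xi i x * cu i"
| "VA_steps N T a0 b0 xi cp cu i (Suc m) x k =
     Min ((\<lambda>a. Cost xi cp cu i x a
        + infsum (\<lambda>(z, c). nbpmf (a0 + real k) (pt b0 N (T - Suc m)) z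
              * nbpmf (real (N - 1) * (a0 + real k)) (pt b0 N (T - Suc m)) c
              * VA_steps N T a0 b0 xi cp cu i m (x * (1 - a) + z) (k + z + c)) UNIV)
       ` Act xi i x)"

definition VA :: "nat \<Rightarrow> nat \<Rightarrow> real \<Rightarrow> real \<Rightarrow> (nat \<Rightarrow> nat) \<Rightarrow> (nat \<Rightarrow> real) \<Rightarrow> (nat \<Rightarrow> real)
    \<Rightarrow> nat \<Rightarrow> nat \<Rightarrow> nat \<Rightarrow> nat \<Rightarrow> real" where
  "VA N T a0 b0 xi cp cu i t x k = VA_steps N T a0 b0 xi cp cu i (T - t) x k"

end

theory Submission
  imports Defs "HOL-Probability.Probability"
begin

text \<open>Costs and admissible actions
  separate over the systems, so the minimum of a sum over the product of the action sets is the
  sum of the minima. For the expected cost-to-go, the induction hypothesis writes the continuation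
  value as a sum over systems, and the summand of system \<open>i\<close> depends only on \<open>Z i\<close> and the
  total \<open>Z 1 + \<dots> + Z N\<close>. Now \<open>Z i\<close> is independent of the sum of the other \<open>N - 1\<close> components,
  which is \<open>NB((N - 1)(a0 + k), p)\<close> because negative binomial laws with a common \<open>p\<close> are closed
  under convolution; so each summand is the expected continuation of the per-system MDP. All value
  functions are bounded, hence every series involved converges absolutely.\<close>

text \<open>In the Pochhammer form the weights need no case split at \<open>r = 0\<close>.\<close>

definition negbin_weight :: "real \<Rightarrow> real \<Rightarrow> nat \<Rightarrow> real" where
  "negbin_weight r p n = pochhammer r n / fact n * p powr r * (1 - p) ^ n"

lemma nbpmf_eq_negbin_weight:
  assumes "r \<ge> 0" "p > 0"
  shows "nbpmf r p n = negbin_weight r p n"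
proof (cases "r = 0")
  case True
  then show ?thesis using assms by (simp add: nbpmf_def negbin_weight_def pochhammer_0_left)
next
  case False
  then have "r \<notin> \<int>\<^sub>\<le>\<^sub>0" using assms by (auto elim!: nonpos_Ints_cases)
  then have "pochhammer r n = Gamma (real n + r) / Gamma r"
    using pochhammer_Gamma[of r n] by (simp add: add.commute)
  then show ?thesis using False by (simp add: nbpmf_def negbin_weight_def)
qed

lemma negbin_weight_nonneg:
  assumes "r \<ge> 0" "p \<le> 1"
  shows "negbin_weight r p n \<ge> 0"
proof -
  have "pochhammer r n \<ge> 0"
    using assms by (cases "r = 0") (auto simp: pochhammer_0_left intro: pochhammer_nonneg)
  then show ?thesis using assms unfolding negbin_weight_def by simp
qed

lemma negbin_weight_sums:
  assumes "r \<ge> 0" "0 < p" "p < 1"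
  shows "negbin_weight r p sums 1"
proof -
  have "(\<lambda>n. ((-r) gchoose n) * (p - 1) ^ n) sums (p powr (-r))"
    using gen_binomial_real[of "p - 1" "-r"] assms by simp
  from sums_mult[OF this, of "p powr r"]
  have "(\<lambda>n. p powr r * (((-r) gchoose n) * (p - 1) ^ n)) sums 1"
    using assms by (simp add: powr_minus)
  moreover have "p powr r * (((-r) gchoose n) * (p - 1) ^ n) = negbin_weight r p n" for n
  proof -
    have "(p - 1) ^ n = (-1) ^ n * (1 - p) ^ n" by (simp flip: power_mult_distrib)
    then show ?thesis unfolding negbin_weight_def gbinomial_pochhammer
      by (simp add: field_simps flip: power_mult_distrib)
  qed
  ultimately show ?thesis by simp
qed

definition negbin_pmf :: "real \<Rightarrow> real \<Rightarrow> nat pmf" where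
  "negbin_pmf r p = embed_pmf (negbin_weight r p)"

lemma pmf_negbin_pmf:
  assumes "r \<ge> 0" "0 < p" "p < 1"
  shows "pmf (negbin_pmf r p) n = negbin_weight r p n"
  unfolding negbin_pmf_def
proof (rule pmf_embed_pmf)
  show nonneg: "0 \<le> negbin_weight r p n" for n
    using assms by (simp add: negbin_weight_nonneg)
  have "(\<integral>\<^sup>+ n. ennreal (negbin_weight r p n) \<partial>count_space UNIV) = (\<Sum>n. ennreal (negbin_weight r p n))"
    by (rule nn_integral_count_space_nat)
  also have "\<dots> = ennreal (\<Sum>n. negbin_weight r p n)"
    using nonneg negbin_weight_sums[OF assms] by (intro suminf_ennreal2 sums_summable) auto
  also have "(\<Sum>n. negbin_weight r p n) = 1"
    using negbin_weight_sums[OF assms] sums_unique by metis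
  finally show "(\<integral>\<^sup>+ n. ennreal (negbin_weight r p n) \<partial>count_space UNIV) = 1" by simp
qed

lemma negbin_pmf_0:
  assumes "0 < p" "p < 1"
  shows "negbin_pmf 0 p = return_pmf 0"
  by (rule pmf_eqI) (use assms in \<open>auto simp: pmf_negbin_pmf negbin_weight_def pochhammer_0_left\<close>)

text \<open>The convolution identity is Vandermonde's identity for rising factorials.\<close>

lemma negbin_pmf_convolution:
  assumes "r1 \<ge> 0" "r2 \<ge> 0" "0 < p" "p < 1"
  shows "map_pmf (\<lambda>(u, c). u + c) (pair_pmf (negbin_pmf r1 p) (negbin_pmf r2 p)) = negbin_pmf (r1 + r2) p"
proof (rule pmf_eqI)
  fix n :: nat
  have preimage: "(\<lambda>(u, c). u + c) -` {n} = (\<lambda>u. (u, n - u)) ` {..n}" by force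
  have "pmf (map_pmf (\<lambda>(u, c). u + c) (pair_pmf (negbin_pmf r1 p) (negbin_pmf r2 p))) n
      = (\<Sum>w\<in>(\<lambda>u. (u, n - u)) ` {..n}. pmf (pair_pmf (negbin_pmf r1 p) (negbin_pmf r2 p)) w)"
    unfolding pmf_map preimage by (rule measure_measure_pmf_finite) simp
  also have "\<dots> = (\<Sum>u\<le>n. negbin_weight r1 p u * negbin_weight r2 p (n - u))"
    by (subst sum.reindex) (auto simp: inj_on_def pmf_pair pmf_negbin_pmf assms)
  also have "\<dots> = (\<Sum>u\<le>n. of_nat (n choose u) * pochhammer r1 u * pochhammer r2 (n - u) / fact n
                    * p powr (r1 + r2) * (1 - p) ^ n)"
  proof (rule sum.cong[OF refl])
    fix u assume "u \<in> {..n}"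
    then have u: "u \<le> n" by simp
    then have "(1 - p) ^ n = (1 - p) ^ u * (1 - p) ^ (n - u)" by (simp flip: power_add)
    then show "negbin_weight r1 p u * negbin_weight r2 p (n - u) = of_nat (n choose u) * pochhammer r1 u
        * pochhammer r2 (n - u) / fact n * p powr (r1 + r2) * (1 - p) ^ n"
      unfolding negbin_weight_def using u assms by (simp add: binomial_fact powr_add field_simps)
  qed
  also have "\<dots> = negbin_weight (r1 + r2) p n"
    unfolding negbin_weight_def pochhammer_binomial_sum by (simp add: sum_divide_distrib sum_distrib_right)
  finally show "pmf (map_pmf (\<lambda>(u, c). u + c) (pair_pmf (negbin_pmf r1 p) (negbin_pmf r2 p))) n
      = pmf (negbin_pmf (r1 + r2) p) n"
    using assms by (simp add: pmf_negbin_pmf)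
qed

lemma map_pmf_component_and_sum_Pi_pmf:
  fixes q :: "'b::comm_monoid_add pmf"
  assumes "finite I" "i \<in> I"
  shows "map_pmf (\<lambda>z. (z i, \<Sum>j\<in>I. z j)) (Pi_pmf I d (\<lambda>_. q))
       = map_pmf (\<lambda>(u, c). (u, u + c)) (pair_pmf q (map_pmf (\<lambda>w. \<Sum>j\<in>I - {i}. w j) (Pi_pmf (I - {i}) d (\<lambda>_. q))))"
proof -
  have I: "I = insert i (I - {i})" using assms by auto
  have sum_upd: "(\<Sum>j\<in>I. if j = i then y else f j) = y + (\<Sum>j\<in>I - {i}. f j)" for f :: "'a \<Rightarrow> 'b" and y
    by (subst sum.remove[OF assms]) auto
  have "map_pmf (\<lambda>z. (z i, \<Sum>j\<in>I. z j)) (Pi_pmf I d (\<lambda>_. q))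
      = map_pmf (\<lambda>(y, f). (y, y + (\<Sum>j\<in>I - {i}. f j))) (pair_pmf q (Pi_pmf (I - {i}) d (\<lambda>_. q)))"
    using assms by (subst I, subst Pi_pmf_insert) (auto simp: map_pmf_comp case_prod_unfold sum_upd simp flip: I)
  also have "\<dots> = map_pmf (\<lambda>(u, c). (u, u + c))
      (map_pmf (\<lambda>(a, b). (id a, \<Sum>j\<in>I - {i}. b j)) (pair_pmf q (Pi_pmf (I - {i}) d (\<lambda>_. q))))"
    by (simp add: map_pmf_comp case_prod_unfold)
  finally show ?thesis by (simp only: map_pair id_def map_pmf_ident)
qed

lemma map_pmf_sum_Pi_negbin_pmf:
  assumes "finite I" "r \<ge> 0" "0 < p" "p < 1"
  shows "map_pmf (\<lambda>z. \<Sum>j\<in>I. z j) (Pi_pmf I d (\<lambda>_. negbin_pmf r p)) = negbin_pmf (real (card I) * r) p"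
  using assms(1)
proof (induction I rule: finite_induct)
  case empty
  then show ?case using assms by (simp add: negbin_pmf_0)
next
  case (insert i I)
  let ?Q = "\<lambda>J. Pi_pmf J d (\<lambda>_. negbin_pmf r p)"
  have "map_pmf (\<lambda>z. \<Sum>j\<in>insert i I. z j) (?Q (insert i I))
      = map_pmf snd (map_pmf (\<lambda>z. (z i, \<Sum>j\<in>insert i I. z j)) (?Q (insert i I)))"
    by (simp add: map_pmf_comp)
  also have "\<dots> = map_pmf snd (map_pmf (\<lambda>(u, c). (u, u + c))
      (pair_pmf (negbin_pmf r p) (map_pmf (\<lambda>w. \<Sum>j\<in>I. w j) (?Q I))))"
    using map_pmf_component_and_sum_Pi_pmf[of "insert i I" i d "negbin_pmf r p"] insert.hyps
    by (simp del: sum.insert)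
  also have "\<dots> = map_pmf snd (map_pmf (\<lambda>(u, c). (u, u + c))
      (pair_pmf (negbin_pmf r p) (negbin_pmf (real (card I) * r) p)))"
    by (simp only: insert.IH)
  also have "\<dots> = map_pmf (\<lambda>(u, c). u + c) (pair_pmf (negbin_pmf r p) (negbin_pmf (real (card I) * r) p))"
    by (simp add: map_pmf_comp case_prod_unfold)
  also have "\<dots> = negbin_pmf (real (card (insert i I)) * r) p"
    using insert assms by (simp add: negbin_pmf_convolution algebra_simps)
  finally show ?case .
qed

lemma expectation_Pi_negbin_pmf_component_and_sum:
  fixes f :: "nat \<Rightarrow> nat \<Rightarrow> real"
  assumes "finite I" "i \<in> I" "r \<ge> 0" "0 < p" "p < 1"
  shows "measure_pmf.expectation (Pi_pmf I d (\<lambda>_. negbin_pmf r p)) (\<lambda>z. f (z i) (\<Sum>j\<in>I. z j))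
       = measure_pmf.expectation (pair_pmf (negbin_pmf r p) (negbin_pmf (real (card I - 1) * r) p))
           (\<lambda>(u, c). f u (u + c))"
proof -
  have "map_pmf (\<lambda>z. (z i, \<Sum>j\<in>I. z j)) (Pi_pmf I d (\<lambda>_. negbin_pmf r p))
      = map_pmf (\<lambda>(u, c). (u, u + c)) (pair_pmf (negbin_pmf r p) (negbin_pmf (real (card I - 1) * r) p))"
    using assms by (simp add: map_pmf_component_and_sum_Pi_pmf map_pmf_sum_Pi_negbin_pmf)
  then have "measure_pmf.expectation (map_pmf (\<lambda>z. (z i, \<Sum>j\<in>I. z j)) (Pi_pmf I d (\<lambda>_. negbin_pmf r p)))
        (\<lambda>(u, s). f u s)
      = measure_pmf.expectation (map_pmf (\<lambda>(u, c). (u, u + c))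
          (pair_pmf (negbin_pmf r p) (negbin_pmf (real (card I - 1) * r) p))) (\<lambda>(u, s). f u s)"
    by simp
  then show ?thesis by (simp add: case_prod_unfold)
qed

lemma infsum_pmf_mult_eq_expectation:
  fixes f :: "'a \<Rightarrow> real"
  assumes "\<And>x. \<bar>f x\<bar> \<le> B"
  shows "infsum (\<lambda>x. pmf q x * f x) UNIV = measure_pmf.expectation q f"
proof -
  have "Infinite_Set_Sum.abs_summable_on (\<lambda>x. pmf q x * B) UNIV"
    by (intro abs_summable_on_cmult_left) (simp add: abs_summable_on_def integrable_pmf)
  then have "Infinite_Set_Sum.abs_summable_on (\<lambda>x. pmf q x * f x) UNIV"
    by (rule abs_summable_on_comparison_test)
       (use assms in \<open>auto simp: abs_mult intro!: mult_left_mono order.trans[OF _ abs_ge_self]\<close>)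
  then show ?thesis by (simp add: pmf_expectation_eq_infsetsum infsetsum_infsum)
qed

lemma infsum_prod_nbpmf_eq_expectation:
  fixes F :: "('a \<Rightarrow> nat) \<Rightarrow> real"
  assumes "finite I" "r \<ge> 0" "0 < p" "p < 1" "\<And>z. \<bar>F z\<bar> \<le> B"
  shows "infsum (\<lambda>z. (\<Prod>i\<in>I. nbpmf r p (z i)) * F z) (PiE I (\<lambda>_. UNIV))
       = measure_pmf.expectation (Pi_pmf I undefined (\<lambda>_. negbin_pmf r p)) F"
proof -
  have "pmf (Pi_pmf I undefined (\<lambda>_. negbin_pmf r p)) z
      = (if z \<in> PiE I (\<lambda>_. UNIV) then \<Prod>i\<in>I. nbpmf r p (z i) else 0)" for z
    using assms by (auto simp: pmf_Pi PiE_iff extensional_def pmf_negbin_pmf nbpmf_eq_negbin_weight)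
  then have "infsum (\<lambda>z. (\<Prod>i\<in>I. nbpmf r p (z i)) * F z) (PiE I (\<lambda>_. UNIV))
      = infsum (\<lambda>z. pmf (Pi_pmf I undefined (\<lambda>_. negbin_pmf r p)) z * F z) UNIV"
    by (intro infsum_cong_neutral) auto
  also have "\<dots> = measure_pmf.expectation (Pi_pmf I undefined (\<lambda>_. negbin_pmf r p)) F"
    using assms(5) by (rule infsum_pmf_mult_eq_expectation)
  finally show ?thesis .
qed

lemma infsum_nbpmf_pair_eq_expectation:
  fixes H :: "nat \<Rightarrow> nat \<Rightarrow> real"
  assumes "r \<ge> 0" "r' \<ge> 0" "0 < p" "p < 1" "\<And>u c. \<bar>H u c\<bar> \<le> B"
  shows "infsum (\<lambda>(u, c). nbpmf r p u * nbpmf r' p c * H u c) UNIV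
       = measure_pmf.expectation (pair_pmf (negbin_pmf r p) (negbin_pmf r' p)) (\<lambda>(u, c). H u c)"
proof -
  have "(\<lambda>(u, c). nbpmf r p u * nbpmf r' p c * H u c)
      = (\<lambda>w. pmf (pair_pmf (negbin_pmf r p) (negbin_pmf r' p)) w * (\<lambda>(u, c). H u c) w)"
    using assms by (auto simp: pmf_pair pmf_negbin_pmf nbpmf_eq_negbin_weight)
  moreover have "\<bar>(\<lambda>(u, c). H u c) w\<bar> \<le> B" for w
    using assms(5) by (simp add: case_prod_unfold)
  ultimately show ?thesis using infsum_pmf_mult_eq_expectation by metis
qed

lemma infsum_nbpmf_pair_bounds:
  fixes H :: "nat \<Rightarrow> nat \<Rightarrow> real"
  assumes "r \<ge> 0" "r' \<ge> 0" "0 < p" "p < 1" "\<And>u c. 0 \<le> H u c \<and> H u c \<le> M"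
  shows "0 \<le> infsum (\<lambda>(u, c). nbpmf r p u * nbpmf r' p c * H u c) UNIV
    \<and> infsum (\<lambda>(u, c). nbpmf r p u * nbpmf r' p c * H u c) UNIV \<le> M"
proof -
  let ?E = "measure_pmf.expectation (pair_pmf (negbin_pmf r p) (negbin_pmf r' p)) (\<lambda>(u, c). H u c)"
  have bounded: "\<bar>H u c\<bar> \<le> M" for u c
    using assms(5)[of u c] by (simp add: abs_of_nonneg)
  have "0 \<le> ?E"
    using assms(5) by (intro integral_nonneg_AE) (auto simp: case_prod_unfold)
  moreover have "?E \<le> M"
    using assms(5) bounded
    by (intro measure_pmf.integral_le_const AE_I2 measure_pmf.integrable_const_bound[where B=M])
       (auto simp: case_prod_unfold)
  ultimately show ?thesis
    using infsum_nbpmf_pair_eq_expectation[OF assms(1-4) bounded] by simp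
qed

lemma Min_sum_PiE:
  fixes g :: "'a \<Rightarrow> 'b \<Rightarrow> 'c::{ordered_comm_monoid_add, linorder}"
  assumes "finite I" "\<And>i. i \<in> I \<Longrightarrow> finite (A i) \<and> A i \<noteq> {}"
  shows "Min ((\<lambda>a. \<Sum>i\<in>I. g i (a i)) ` PiE I A) = (\<Sum>i\<in>I. Min (g i ` A i))"
proof (rule Min_eqI)
  show "finite ((\<lambda>a. \<Sum>i\<in>I. g i (a i)) ` PiE I A)"
    using assms by (auto intro!: finite_PiE)
  show "(\<Sum>i\<in>I. Min (g i ` A i)) \<le> y" if "y \<in> (\<lambda>a. \<Sum>i\<in>I. g i (a i)) ` PiE I A" for y
  proof -
    from that obtain a where a: "a \<in> PiE I A" "y = (\<Sum>i\<in>I. g i (a i))" by auto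
    have "Min (g i ` A i) \<le> g i (a i)" if "i \<in> I" for i
      using a(1) assms(2)[OF that] that by (intro Min_le) (auto simp: PiE_iff)
    then show ?thesis unfolding a(2) by (intro sum_mono)
  qed
  have "\<forall>i\<in>I. \<exists>b. b \<in> A i \<and> g i b = Min (g i ` A i)"
  proof
    fix i assume "i \<in> I"
    then have "Min (g i ` A i) \<in> g i ` A i" using assms(2) by (intro Min_in) auto
    then show "\<exists>b. b \<in> A i \<and> g i b = Min (g i ` A i)" by auto
  qed
  then obtain a where a: "\<forall>i\<in>I. a i \<in> A i \<and> g i (a i) = Min (g i ` A i)"
    by (auto dest!: bchoice)
  have "(\<Sum>i\<in>I. Min (g i ` A i)) = (\<lambda>a. \<Sum>i\<in>I. g i (a i)) (restrict a I)"
    using a by (auto intro: sum.cong)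
  moreover have "restrict a I \<in> PiE I A"
    using a by (simp add: restrict_PiE_iff)
  ultimately show "(\<Sum>i\<in>I. Min (g i ` A i)) \<in> (\<lambda>a. \<Sum>i\<in>I. g i (a i)) ` PiE I A"
    by (rule image_eqI)
qed

lemma infsum_iid_nbpmf_sum_split:
  fixes V :: "nat \<Rightarrow> nat \<Rightarrow> nat \<Rightarrow> real" and y :: "nat \<Rightarrow> nat"
  assumes "r \<ge> 0" "0 < p" "p < 1"
    and bounded: "\<And>i u s. i \<in> {1..N} \<Longrightarrow> \<bar>V i u s\<bar> \<le> B i"
  shows "infsum (\<lambda>z. (\<Prod>i=1..N. nbpmf r p (z i)) * (\<Sum>i=1..N. V i (y i + z i) (k + (\<Sum>j=1..N. z j))))
            (PiE {1..N} (\<lambda>_. UNIV))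
       = (\<Sum>i=1..N. infsum (\<lambda>(u, c). nbpmf r p u * nbpmf (real (N - 1) * r) p c * V i (y i + u) (k + u + c)) UNIV)"
proof -
  define Q where "Q = Pi_pmf {1..N} undefined (\<lambda>_. negbin_pmf r p)"
  have integrable: "integrable Q (\<lambda>z. V i (y i + z i) (k + (\<Sum>j=1..N. z j)))" if "i \<in> {1..N}" for i
    using bounded[OF that] by (intro measure_pmf.integrable_const_bound[where B="B i"]) auto
  have "infsum (\<lambda>z. (\<Prod>i=1..N. nbpmf r p (z i)) * (\<Sum>i=1..N. V i (y i + z i) (k + (\<Sum>j=1..N. z j))))
            (PiE {1..N} (\<lambda>_. UNIV))
      = measure_pmf.expectation Q (\<lambda>z. \<Sum>i=1..N. V i (y i + z i) (k + (\<Sum>j=1..N. z j)))"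
    unfolding Q_def using assms(1-3)
    by (intro infsum_prod_nbpmf_eq_expectation[where B="\<Sum>i=1..N. B i"])
       (auto intro!: order.trans[OF sum_abs] sum_mono bounded)
  also have "\<dots> = (\<Sum>i=1..N. measure_pmf.expectation Q (\<lambda>z. V i (y i + z i) (k + (\<Sum>j=1..N. z j))))"
    using integrable by (rule Bochner_Integration.integral_sum)
  also have "\<dots> = (\<Sum>i=1..N. infsum (\<lambda>(u, c). nbpmf r p u * nbpmf (real (N - 1) * r) p c
      * V i (y i + u) (k + u + c)) UNIV)"
  proof (rule sum.cong[OF refl])
    fix i assume i: "i \<in> {1..N}"
    have "measure_pmf.expectation Q (\<lambda>z. V i (y i + z i) (k + (\<Sum>j=1..N. z j)))
        = measure_pmf.expectation (pair_pmf (negbin_pmf r p) (negbin_pmf (real (N - 1) * r) p))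
            (\<lambda>(u, c). V i (y i + u) (k + (u + c)))"
      unfolding Q_def using assms(1-3) i
      by (subst expectation_Pi_negbin_pmf_component_and_sum[where f="\<lambda>u s. V i (y i + u) (k + s)"]) auto
    also have "\<dots> = infsum (\<lambda>(u, c). nbpmf r p u * nbpmf (real (N - 1) * r) p c
        * V i (y i + u) (k + u + c)) UNIV"
      using infsum_nbpmf_pair_eq_expectation[of r "real (N - 1) * r" p "\<lambda>u c. V i (y i + u) (k + u + c)" "B i"]
        assms(1-3) bounded[OF i]
      by (simp add: add.assoc)
    finally show "measure_pmf.expectation Q (\<lambda>z. V i (y i + z i) (k + (\<Sum>j=1..N. z j))) = \<dots>" .
  qed
  finally show ?thesis .
qed

lemma pt_bounds:
  assumes "b0 > 0"
  shows "0 < pt b0 N t" "pt b0 N t < 1"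
  using assms by (simp_all add: pt_def divide_simps add_pos_nonneg)

lemma finite_Act: "finite (Act xi i x)"
  by (simp add: Act_def)

lemma Act_nonempty: "Act xi i x \<noteq> {}"
  by (simp add: Act_def)

lemma Act_zero_or_one: "a \<in> Act xi i x \<Longrightarrow> a = 0 \<or> a = 1"
  by (auto simp: Act_def split: if_splits)

lemma Cost_bounds:
  assumes "0 \<le> cp i" "cp i \<le> cu i" "a \<in> Act xi i x"
  shows "0 \<le> Cost xi cp cu i x a" "Cost xi cp cu i x a \<le> cu i"
  using assms Act_zero_or_one[OF assms(3)] by (auto simp: Cost_def Ind_def)

lemma VA_steps_bounds:
  assumes "0 \<le> cp i" "cp i \<le> cu i" "a0 \<ge> 0" "b0 > 0"
  shows "0 \<le> VA_steps N T a0 b0 xi cp cu i m x k \<and> VA_steps N T a0 b0 xi cp cu i m x k \<le> real (Suc m) * cu i"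
proof (induction m arbitrary: x k)
  case 0
  then show ?case using assms by (simp add: Ind_def)
next
  case (Suc m)
  let ?p = "pt b0 N (T - Suc m)" and ?r = "a0 + real k"
  let ?f = "\<lambda>a. Cost xi cp cu i x a + infsum (\<lambda>(z, c). nbpmf ?r ?p z * nbpmf (real (N - 1) * ?r) ?p c
      * VA_steps N T a0 b0 xi cp cu i m (x * (1 - a) + z) (k + z + c)) UNIV"
  have "Min (?f ` Act xi i x) \<in> ?f ` Act xi i x"
    using finite_Act Act_nonempty by (intro Min_in) auto
  then obtain a where a: "a \<in> Act xi i x" "VA_steps N T a0 b0 xi cp cu i (Suc m) x k = ?f a"
    by auto
  have "0 \<le> infsum (\<lambda>(z, c). nbpmf ?r ?p z * nbpmf (real (N - 1) * ?r) ?p c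
      * VA_steps N T a0 b0 xi cp cu i m (x * (1 - a) + z) (k + z + c)) UNIV
    \<and> infsum (\<lambda>(z, c). nbpmf ?r ?p z * nbpmf (real (N - 1) * ?r) ?p c
      * VA_steps N T a0 b0 xi cp cu i m (x * (1 - a) + z) (k + z + c)) UNIV \<le> real (Suc m) * cu i"
    using assms pt_bounds Suc.IH by (intro infsum_nbpmf_pair_bounds) auto
  then show ?case
    using a Cost_bounds[where cp=cp and cu=cu, OF assms(1,2) a(1)] by (simp add: algebra_simps)
qed

lemma VO_continuation_separates:
  fixes x :: "nat \<Rightarrow> nat" and k :: nat
  assumes costs: "\<And>i. i \<in> {1..N} \<Longrightarrow> 0 \<le> cp i \<and> cp i \<le> cu i" and "a0 \<ge> 0" "b0 > 0"
    and IH: "\<And>x k. VO_steps N T a0 b0 xi cp cu m x k = (\<Sum>i=1..N. VA_steps N T a0 b0 xi cp cu i m (x i) k)"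
    and a: "a \<in> PiE {1..N} (\<lambda>i. Act xi i (x i))"
  defines "p \<equiv> pt b0 N (T - Suc m)" and "r \<equiv> a0 + real k"
  shows "infsum (\<lambda>z. (\<Prod>i=1..N. nbpmf r p (z i))
            * VO_steps N T a0 b0 xi cp cu m (\<lambda>i. (if a i = 1 then 0 else x i) + z i) (k + (\<Sum>i=1..N. z i)))
          (PiE {1..N} (\<lambda>_. UNIV))
       = (\<Sum>i=1..N. infsum (\<lambda>(z, c). nbpmf r p z * nbpmf (real (N - 1) * r) p c
            * VA_steps N T a0 b0 xi cp cu i m (x i * (1 - a i) + z) (k + z + c)) UNIV)"
proof -
  have replaced: "(if a i = 1 then 0 else x i) = x i * (1 - a i)" if "i \<in> {1..N}" for i
    using a that Act_zero_or_one[of "a i" xi i "x i"] by (auto simp: PiE_iff)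
  have bounded: "\<bar>VA_steps N T a0 b0 xi cp cu i m u s\<bar> \<le> real (Suc m) * cu i" if "i \<in> {1..N}" for i u s
  proof -
    have "0 \<le> VA_steps N T a0 b0 xi cp cu i m u s \<and> VA_steps N T a0 b0 xi cp cu i m u s \<le> real (Suc m) * cu i"
      using VA_steps_bounds[of cp i cu a0 b0] costs[OF that] assms(2,3) by simp
    then show ?thesis by (simp add: abs_of_nonneg)
  qed
  have r: "r \<ge> 0" and p: "0 < p" "p < 1"
    unfolding r_def p_def using assms(2,3) pt_bounds by auto
  have "infsum (\<lambda>z. (\<Prod>i=1..N. nbpmf r p (z i))
            * VO_steps N T a0 b0 xi cp cu m (\<lambda>i. (if a i = 1 then 0 else x i) + z i) (k + (\<Sum>i=1..N. z i)))
          (PiE {1..N} (\<lambda>_. UNIV))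
      = (\<Sum>i=1..N. infsum (\<lambda>(z, c). nbpmf r p z * nbpmf (real (N - 1) * r) p c
            * VA_steps N T a0 b0 xi cp cu i m ((if a i = 1 then 0 else x i) + z) (k + z + c)) UNIV)"
    unfolding IH
    using infsum_iid_nbpmf_sum_split[where V="\<lambda>i. VA_steps N T a0 b0 xi cp cu i m" and N=N
        and y="\<lambda>i. if a i = 1 then 0 else x i" and k=k, OF r p bounded]
    by simp
  also have "\<dots> = (\<Sum>i=1..N. infsum (\<lambda>(z, c). nbpmf r p z * nbpmf (real (N - 1) * r) p c
            * VA_steps N T a0 b0 xi cp cu i m (x i * (1 - a i) + z) (k + z + c)) UNIV)"
    by (rule sum.cong[OF refl]) (simp only: replaced)
  finally show ?thesis .
qed

lemma VO_steps_eq_sum_VA_steps: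
  assumes "\<And>i. i \<in> {1..N} \<Longrightarrow> 0 \<le> cp i \<and> cp i \<le> cu i" "a0 \<ge> 0" "b0 > 0"
  shows "VO_steps N T a0 b0 xi cp cu m x k = (\<Sum>i=1..N. VA_steps N T a0 b0 xi cp cu i m (x i) k)"
proof (induction m arbitrary: x k)
  case 0
  then show ?case by simp
next
  case (Suc m)
  define h where "h i a = Cost xi cp cu i (x i) a
    + infsum (\<lambda>(z, c). nbpmf (a0 + real k) (pt b0 N (T - Suc m)) z
        * nbpmf (real (N - 1) * (a0 + real k)) (pt b0 N (T - Suc m)) c
        * VA_steps N T a0 b0 xi cp cu i m (x i * (1 - a) + z) (k + z + c)) UNIV" for i a
  have "VO_steps N T a0 b0 xi cp cu (Suc m) x k
      = Min ((\<lambda>a. \<Sum>i=1..N. h i (a i)) ` PiE {1..N} (\<lambda>i. Act xi i (x i)))"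
    unfolding VO_steps.simps h_def sum.distrib
    using VO_continuation_separates[OF assms Suc.IH] by (intro arg_cong[where f=Min] image_cong) simp_all
  also have "\<dots> = (\<Sum>i=1..N. Min (h i ` Act xi i (x i)))"
    by (rule Min_sum_PiE) (simp_all add: finite_Act Act_nonempty)
  finally show ?case by (simp add: h_def)
qed

theorem theorem1:
  fixes N T :: nat and a0 b0 :: real and xi :: "nat \<Rightarrow> nat" and cp cu :: "nat \<Rightarrow> real"
    and t :: nat and x :: "nat \<Rightarrow> nat" and k :: nat
  assumes "N \<ge> 1" and "T \<ge> 1" and "a0 > 0" and "b0 > 0"
    and "\<And>i. i \<in> {1..N} \<Longrightarrow> xi i \<ge> 1"
    and "\<And>i. i \<in> {1..N} \<Longrightarrow> 0 < cp i \<and> cp i < cu i"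
    and "t \<le> T"
  shows "VO N T a0 b0 xi cp cu t x k = (\<Sum>i=1..N. VA N T a0 b0 xi cp cu i t (x i) k)"
  unfolding VO_def VA_def
  using assms(3,4,6) by (intro VO_steps_eq_sum_VA_steps) (auto simp: less_imp_le)

end
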